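(* Let $d,\lambda_0,N_0\in\mathbb N$ and $\epsilon\in\left(0,\frac{1}{\lambda_0+1}\right)$ be given. There exists $c=c(\epsilon)>0$ such that the following holds for every positive integer $k\geq c\log d$: there is a scaling factor $\lambda_1=\lambda_1(\lambda_0,\epsilon,k,N_0)\in\mathbb N$ such that for every integer $\lambda\geq\lambda_1$ and for every point set $\mathcal{D}\subset\frac{\lambda}{\lambda_0}\mathbb Z^d\cap B_{\lambda N_0}$ with $|\mathcal{D}|=d$, there is a mapping $F:\mathcal{D}\to\frac{1}{\lambda_0}\mathbb Z^k$ such that for all $x,y\in\mathcal{D}$, \[ \left(1-\epsilon-\frac{\epsilon}{\lambda\lambda_0}\right)\|x-y\|\leq\|F(x)-F(y)\|\leq\left(1+\epsilon+\frac{\epsilon}{\lambda\lambda_0}\right)\|x-y\|. \]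
   Context: $\|\cdot\|$ denotes the Euclidean norm. $B_r$ denotes the closed Euclidean ball of radius $r$ centered at the origin in $\mathbb R^d$. For $s>0$ and $m\in\mathbb N$, $s\mathbb Z^m=\{s z: z\in\mathbb Z^m\}$. *)

theory Defs
  imports "HOL-Analysis.Analysis"
begin

text \<open>Vectors of R^m are represented as functions nat => real that vanish
outside the coordinates 0..m-1 (the dimension m varies inside the statement).\<close>

definition vec_space :: "nat \<Rightarrow> (nat \<Rightarrow> real) set" where
  "vec_space m = {x. \<forall>i\<ge>m. x i = 0}"

definition vnorm :: "nat \<Rightarrow> (nat \<Rightarrow> real) \<Rightarrow> real" where
  "vnorm m x = sqrt (\<Sum>i<m. (x i)\<^sup>2)"

definition scaled_lattice :: "real \<Rightarrow> nat \<Rightarrow> (nat \<Rightarrow> real) set" where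
  "scaled_lattice s m = {x \<in> vec_space m. \<forall>i<m. \<exists>z::int. x i = s * of_int z}"

definition cball0 :: "nat \<Rightarrow> real \<Rightarrow> (nat \<Rightarrow> real) set" where
  "cball0 m r = {x \<in> vec_space m. vnorm m x \<le> r}"

end

theory Submission
  imports Defs
begin

text \<open>For a uniformly random \<open>k \<times> d\<close> matrix \<open>A\<close> with entries \<open>\<plusminus>1\<close> and a unit
vector \<open>u\<close>, the squared norm \<open>|A u|\<^sup>2\<close> deviates from \<open>k\<close> by more than \<open>\<delta> k\<close> with probability at most
\<open>2 exp (- k \<delta>\<^sup>2 / 576)\<close>: a Chernoff bound, using the moment generating function of the square of a
Rademacher sum. A union bound over the at most \<open>d\<^sup>2\<close> directions \<open>x - y\<close> of pairs of points of \<open>\<D>\<close>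
yields a matrix with \<open>A / \<surd>k\<close> a \<open>(1 \<plusminus> \<delta>)\<close>-isometry on \<open>\<D>\<close> once \<open>k \<ge> c log d\<close>.
Rounding every coordinate of \<open>A x / \<surd>k\<close> to \<open>(1/\<lambda>\<^sub>0) \<int>\<close> moves the image by at most
\<open>\<surd>k / (2\<lambda>\<^sub>0)\<close>, and distinct points of \<open>\<D>\<close> are at distance at least \<open>\<lambda>/\<lambda>\<^sub>0\<close>, so for large \<open>\<lambda>\<close>
the rounding costs only another factor \<open>1 \<plusminus> \<delta>\<close>. Probabilities are replaced by counting over
the finite set of sign matrices.\<close>

section \<open>Exponential inequalities\<close>

lemma power_two_mult_fact_le_fact_double: "2^m * fact m \<le> (fact (2*m) :: real)"
proof (induction m)
  case 0
  then show ?case by simp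
next
  case (Suc m)
  have "(2::real)^Suc m * fact (Suc m) = (2 * of_nat (m+1)) * (2^m * fact m)"
    by (simp add: algebra_simps)
  also have "\<dots> \<le> (of_nat (2*m+2) * of_nat (2*m+1)) * fact (2*m)"
    by (rule mult_mono) (use Suc in auto)
  also have "\<dots> = fact (2 * Suc m)"
    by (simp add: fact_Suc algebra_simps)
  finally show ?case .
qed

lemma exp_sums: "(\<lambda>n. (x::real)^n / fact n) sums exp x"
  using exp_converges[of x] by (simp add: divide_inverse mult.commute)

lemma cosh_le_exp_half_square: "cosh (x::real) \<le> exp (x^2/2)"
proof -
  have even_terms: "(\<lambda>n. if even n then (x^2/2)^(n div 2) / fact (n div 2) else 0) sums exp (x^2/2)"
    using sums_if[OF sums_zero exp_sums[of "x^2/2"]] by simp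
  show ?thesis
  proof (rule sums_le[OF _ cosh_converges even_terms])
    fix n
    show "(if even n then x^n /\<^sub>R fact n else 0)
      \<le> (if even n then (x^2/2)^(n div 2) / fact (n div 2) else 0)"
    proof (cases "even n")
      case True
      then obtain m where n: "n = 2*m" by blast
      have "x^n /\<^sub>R fact n = (x^2)^m / fact (2*m)"
        unfolding n by (simp add: power_mult divide_inverse_commute)
      also have "\<dots> \<le> (x^2)^m / (2^m * fact m)"
        by (intro divide_left_mono power_two_mult_fact_le_fact_double) auto
      also have "\<dots> = (x^2/2)^(n div 2) / fact (n div 2)"
        unfolding n by (simp add: power_divide)
      finally show ?thesis
        using True by simp
    qed simp
  qed
qed

lemma fact_double_mult_exp_le: "fact (2*m) * exp (real m) \<le> 6^m * fact m * (2 * real m)^m"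
proof -
  have "(fact (2*m) :: nat) = fact m * fact m * ((2*m) choose m)"
    using binomial_fact_lemma[of m "2*m"] by simp
  then have "(fact (2*m) :: real) = fact m * fact m * real ((2*m) choose m)"
    by (metis of_nat_fact of_nat_mult)
  also have "\<dots> \<le> fact m * real m ^ m * 4^m"
  proof (intro mult_mono)
    show "(fact m :: real) \<le> real m ^ m"
      using fact_le_power[of m] by simp
    show "real ((2*m) choose m) \<le> 4^m"
      using binomial_le_pow2[of "2*m" m] by (simp add: power_mult flip: of_nat_le_iff)
  qed auto
  finally have "fact (2*m) * exp (real m) \<le> (fact m * real m ^ m * 4^m) * 3^m"
    using exp_of_nat_mult[of m "1::real"] power_mono[OF exp_le, of m]
    by (intro mult_mono) auto
  also have "\<dots> = 6^m * fact m * (2 * real m)^m"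
  proof -
    have "(4::real)^m * 3^m = 6^m * 2^m"
      by (simp flip: power_mult_distrib)
    then show ?thesis
      by (simp add: power_mult_distrib mult_ac)
  qed
  finally show ?thesis .
qed

lemma power_div_fact_le_exp: "(y::real) \<ge> 0 \<Longrightarrow> y^n / fact n \<le> exp y"
  using sum_le_suminf[OF sums_summable[OF exp_sums[of y]], of "{n}"] exp_sums[of y]
  by (simp add: sums_iff)

lemma exp_minus_le_quadratic:
  assumes "(x::real) \<ge> 0"
  shows "exp (-x) \<le> 1 - x + x^2/2"
proof -
  let ?f = "\<lambda>x::real. 1 - x + x^2/2 - exp (-x)"
  have "?f 0 \<le> ?f x"
  proof (rule DERIV_nonneg_imp_nondecreasing[OF assms])
    fix y :: real
    have "(?f has_real_derivative (-1 + y + exp (-y))) (at y)"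
      by (auto intro!: derivative_eq_intros simp: power2_eq_square)
    moreover have "0 \<le> -1 + y + exp (-y)"
      using exp_ge_add_one_self[of "-y"] by linarith
    ultimately show "\<exists>d. (?f has_real_derivative d) (at y) \<and> 0 \<le> d" by blast
  qed
  then show ?thesis by simp
qed

lemma exp_minus_le_inverse_power:
  assumes "0 < n" "real m * ln n \<le> x"
  shows "exp (- x) \<le> 1 / n ^ m"
proof -
  have "exp (- x) \<le> exp (- (real m * ln n))"
    using assms by simp
  also have "\<dots> = 1 / n ^ m"
    using assms by (simp add: exp_minus exp_of_nat_mult inverse_eq_divide)
  finally show ?thesis .
qed

lemma vnorm_eq_L2_set: "vnorm m x = L2_set x {..<m}"
  unfolding vnorm_def L2_set_def by simp

lemma vnorm_nonneg: "0 \<le> vnorm m x"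
  by (simp add: vnorm_def sum_nonneg)

lemma vnorm_diff_self [simp]: "vnorm m (x - x) = 0"
  by (simp add: vnorm_def)

lemma vnorm_minus_commute: "vnorm m (x - y) = vnorm m (y - x)"
  by (simp add: vnorm_def power2_commute)

lemma vnorm_diff_le: "vnorm m (x - y) \<le> vnorm m x + vnorm m y"
  using L2_set_triangle_ineq[of x "- y" "{..<m}"]
  by (simp add: vnorm_eq_L2_set L2_set_def)

lemma abs_vnorm_diff_le: "\<bar>vnorm m x - vnorm m y\<bar> \<le> vnorm m (x - y)"
proof -
  have "vnorm m x \<le> vnorm m (x - y) + vnorm m y"
    using L2_set_triangle_ineq[of "x - y" y "{..<m}"] by (simp add: vnorm_eq_L2_set)
  moreover have "vnorm m y \<le> vnorm m (x - y) + vnorm m x"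
    using L2_set_triangle_ineq[of "y - x" x "{..<m}"] vnorm_minus_commute[of m x y]
    by (simp add: vnorm_eq_L2_set)
  ultimately show ?thesis
    by linarith
qed

lemma vnorm_sq: "(vnorm m x)^2 = (\<Sum>i<m. (x i)^2)"
  by (simp add: vnorm_def sum_nonneg)

lemma sum_sq_div_vnorm:
  assumes "vnorm d v \<noteq> 0"
  shows "(\<Sum>i<d. (v i / vnorm d v)^2) = 1"
  using assms by (simp add: power_divide flip: sum_divide_distrib vnorm_sq)

section \<open>Rademacher sums\<close>

text \<open>A sum over \<open>sign_vectors d\<close> is \<open>2\<^sup>d\<close> times an expectation over a uniformly random sign
vector \<open>r\<close>, so the following are moment bounds for the Rademacher sum \<open>signed_sum d r u\<close>.\<close>

definition sign_vectors :: "nat \<Rightarrow> (nat \<Rightarrow> real) set" where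
  "sign_vectors d = PiE {..<d} (\<lambda>_. {-1, 1})"

definition signed_sum :: "nat \<Rightarrow> (nat \<Rightarrow> real) \<Rightarrow> (nat \<Rightarrow> real) \<Rightarrow> real" where
  "signed_sum d r u = (\<Sum>i<d. r i * u i)"

lemma finite_sign_vectors: "finite (sign_vectors d)"
  unfolding sign_vectors_def by (intro finite_PiE) auto

lemma card_sign_vectors: "card (sign_vectors d) = 2^d"
  unfolding sign_vectors_def by (simp add: card_PiE numeral_2_eq_2)

lemma sum_sign_vectors_prod:
  fixes f :: "nat \<Rightarrow> real \<Rightarrow> 'a::comm_semiring_1"
  shows "(\<Sum>r\<in>sign_vectors d. \<Prod>i<d. f i (r i)) = (\<Prod>i<d. f i (-1) + f i 1)"
  using prod_sum_PiE[of "{..<d}" "\<lambda>_. {-1, 1}" f] by (simp add: sign_vectors_def)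

lemma rademacher_mgf_le:
  "(\<Sum>r\<in>sign_vectors d. exp (l * signed_sum d r u)) \<le> 2^d * exp (l^2 * (\<Sum>i<d. (u i)^2) / 2)"
proof -
  have "(\<Sum>r\<in>sign_vectors d. exp (l * signed_sum d r u))
      = (\<Sum>r\<in>sign_vectors d. \<Prod>i<d. exp (l * r i * u i))"
    unfolding signed_sum_def by (simp add: sum_distrib_left exp_sum mult.assoc)
  also have "\<dots> = (\<Prod>i<d. exp (- (l * u i)) + exp (l * u i))"
    using sum_sign_vectors_prod[where f="\<lambda>i s. exp (l * s * u i)"] by simp
  also have "\<dots> \<le> (\<Prod>i<d. 2 * exp ((l * u i)^2 / 2))"
  proof (intro prod_mono conjI)
    fix i
    show "exp (- (l * u i)) + exp (l * u i) \<le> 2 * exp ((l * u i)^2 / 2)"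
      using cosh_le_exp_half_square[of "l * u i"] by (simp add: cosh_def)
  qed simp
  also have "\<dots> = 2^d * exp (l^2 * (\<Sum>i<d. (u i)^2) / 2)"
    by (simp add: prod.distrib exp_sum[symmetric] sum_divide_distrib sum_distrib_left
        power_mult_distrib)
  finally show ?thesis .
qed

lemma sum_sign_vectors_mult:
  assumes "i < d" "j < d"
  shows "(\<Sum>r\<in>sign_vectors d. r i * r j) = (if i = j then 2^d else 0)"
proof -
  define f where "f = (\<lambda>l (s::real). (if l = i then s else 1) * (if l = j then s else 1))"
  have "(\<Sum>r\<in>sign_vectors d. r i * r j) = (\<Sum>r\<in>sign_vectors d. \<Prod>l<d. f l (r l))"
    unfolding f_def prod.distrib using assms by (simp add: prod.delta)
  also have "\<dots> = (\<Prod>l<d. f l (-1) + f l 1)"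
    by (rule sum_sign_vectors_prod)
  also have "\<dots> = (\<Prod>l<d. if l \<in> {i, j} \<and> i \<noteq> j then 0 else 2)"
    by (intro prod.cong) (auto simp: f_def)
  also have "\<dots> = (if i = j then 2^d else 0)"
  proof (cases "i = j")
    case False
    show ?thesis
      by (rule trans[OF prod_zero]) (use assms False in \<open>auto intro: bexI[of _ i]\<close>)
  qed simp
  finally show ?thesis .
qed

lemma rademacher_second_moment:
  "(\<Sum>r\<in>sign_vectors d. (signed_sum d r u)^2) = 2^d * (\<Sum>i<d. (u i)^2)"
proof -
  have "(\<Sum>r\<in>sign_vectors d. (signed_sum d r u)^2)
      = (\<Sum>i<d. \<Sum>j<d. (\<Sum>r\<in>sign_vectors d. r i * r j) * (u i * u j))"
    unfolding signed_sum_def power2_eq_square sum_product sum_distrib_right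
    by (subst sum.swap, rule sum.cong[OF refl], subst sum.swap) (simp add: sum_distrib_left mult_ac)
  also have "\<dots> = (\<Sum>i<d. \<Sum>j<d. if i = j then 2^d * (u i * u j) else 0)"
    by (intro sum.cong refl) (simp add: sum_sign_vectors_mult)
  also have "\<dots> = 2^d * (\<Sum>i<d. (u i)^2)"
    by (simp add: sum_distrib_left power2_eq_square)
  finally show ?thesis .
qed

lemma rademacher_even_moment_le:
  assumes u: "(\<Sum>i<d. (u i)^2) = 1" and m: "m \<ge> 1"
  shows "(\<Sum>r\<in>sign_vectors d. (signed_sum d r u)^(2*m)) \<le> 2^d * 2 * 6^m * fact m"
proof -
  \<comment> \<open>\<open>z\<^sup>2\<^sup>m\<close> is controlled by one term of the series of \<open>exp (l \<bar>z\<bar>)\<close>; the choice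
    \<open>l = \<surd>(2m)\<close> makes the moment generating function bound equal to \<open>2\<^sup>d exp m\<close>\<close>
  define l where "l = sqrt (2 * real m)"
  define C where "C = fact (2*m) / (2 * real m)^m"
  have l: "l > 0" "l^2 = 2 * real m"
    using m by (simp_all add: l_def)
  have pos: "(2 * real m)^m > 0"
    using m by simp
  have term_le: "z^(2*m) \<le> C * (exp (l*z) + exp (-l*z))" for z :: real
  proof -
    have "(2 * real m)^m * z^(2*m) = (l*\<bar>z\<bar>)^(2*m)"
      by (simp add: power_mult power_mult_distrib l)
    also have "\<dots> \<le> fact (2*m) * exp (l*\<bar>z\<bar>)"
      using power_div_fact_le_exp[of "l*\<bar>z\<bar>" "2*m"] l by (simp add: divide_le_eq mult.commute)
    also have "\<dots> \<le> fact (2*m) * (exp (l*z) + exp (-l*z))"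
      by (intro mult_left_mono) (cases "z \<ge> 0", auto)
    finally show ?thesis
      using pos by (simp add: C_def field_simps)
  qed
  have mgf: "(\<Sum>r\<in>sign_vectors d. exp (s * signed_sum d r u)) \<le> 2^d * exp (real m)"
    if "s^2 = 2 * real m" for s
    using rademacher_mgf_le[of s d u] by (simp add: u that)
  have "(\<Sum>r\<in>sign_vectors d. (signed_sum d r u)^(2*m))
      \<le> C * ((\<Sum>r\<in>sign_vectors d. exp (l * signed_sum d r u))
             + (\<Sum>r\<in>sign_vectors d. exp (-l * signed_sum d r u)))"
    using sum_mono[OF term_le, of "\<lambda>r. signed_sum d r u" "sign_vectors d"]
    by (simp add: sum.distrib sum_distrib_left distrib_left)
  also have "\<dots> \<le> C * (2 * 2^d * exp (real m))"
    using mgf[of l] mgf[of "-l"] l pos by (intro mult_left_mono) (auto simp: C_def)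
  also have "\<dots> = 2^d * 2 * (fact (2*m) * exp (real m)) / (2 * real m)^m"
    by (simp add: C_def)
  also have "\<dots> \<le> 2^d * 2 * (6^m * fact m * (2 * real m)^m) / (2 * real m)^m"
    by (intro divide_right_mono mult_left_mono fact_double_mult_exp_le) auto
  also have "\<dots> = 2^d * 2 * 6^m * fact m"
    using pos m by simp
  finally show ?thesis .
qed

lemma rademacher_square_mgf_le:
  assumes u: "(\<Sum>i<d. (u i)^2) = 1" and t: "0 \<le> t" "t \<le> 1/12"
  shows "(\<Sum>r\<in>sign_vectors d. exp (t * (signed_sum d r u)^2)) \<le> 2^d * (1 + t + 144 * t^2)"
proof -
  define f where "f = (\<lambda>n. \<Sum>r\<in>sign_vectors d. (t * (signed_sum d r u)^2)^n / fact n)"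
  define q where "q = 6 * t"
  have q: "0 \<le> q" "q \<le> 1/2"
    using t by (auto simp: q_def)
  have f_sums: "f sums (\<Sum>r\<in>sign_vectors d. exp (t * (signed_sum d r u)^2))"
    unfolding f_def by (intro sums_sum exp_sums)
  have f_eq: "f n = t^n * (\<Sum>r\<in>sign_vectors d. (signed_sum d r u)^(2*n)) / fact n" for n
    unfolding f_def by (simp add: sum_divide_distrib sum_distrib_left power_mult_distrib power_mult)
  have "f 0 = 2^d" "f 1 = 2^d * t"
    using rademacher_second_moment[of d u] by (simp_all add: f_eq card_sign_vectors u)
  then have head: "sum f {..<2} = 2^d + 2^d * t"
    by (simp add: numeral_2_eq_2)
  have f_tail_le: "f (n+2) \<le> 2^d * 2 * q^2 * q^n" for n
  proof -
    have "f (n+2) \<le> t^(n+2) * (2^d * 2 * 6^(n+2) * fact (n+2)) / fact (n+2)"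
      unfolding f_eq using t by (intro divide_right_mono mult_left_mono rademacher_even_moment_le u) auto
    also have "\<dots> = 2^d * 2 * (6 * t)^(n+2)"
      by (simp del: fact_Suc add: power_mult_distrib)
    also have "\<dots> = 2^d * 2 * q^2 * q^n"
      by (simp add: q_def power_add power2_eq_square mult_ac)
    finally show ?thesis .
  qed
  have "(\<Sum>n. f (n+2)) \<le> 2^d * 2 * q^2 * (1 / (1 - q))"
    using q f_tail_le geometric_sums[of q]
    by (intro sums_le[OF _ summable_sums sums_mult] summable_ignore_initial_segment
        sums_summable[OF f_sums]) auto
  also have "\<dots> \<le> 2^d * 2 * q^2 * 2"
    using q by (intro mult_left_mono) (auto simp: field_simps)
  finally have tail: "(\<Sum>n. f (n+2)) \<le> 2^d * 144 * t^2"
    by (simp add: q_def power2_eq_square)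
  have "(\<Sum>r\<in>sign_vectors d. exp (t * (signed_sum d r u)^2)) = (\<Sum>n. f (n+2)) + sum f {..<2}"
    using f_sums suminf_split_initial_segment[of f 2] by (simp add: sums_iff)
  then show ?thesis
    using head tail by (simp add: algebra_simps)
qed

lemma rademacher_square_mgf_neg_le:
  assumes u: "(\<Sum>i<d. (u i)^2) = 1" and t: "0 \<le> t"
  shows "(\<Sum>r\<in>sign_vectors d. exp (- (t * (signed_sum d r u)^2))) \<le> 2^d * (1 - t + 72 * t^2)"
proof -
  have "(\<Sum>r\<in>sign_vectors d. exp (- (t * (signed_sum d r u)^2)))
      \<le> (\<Sum>r\<in>sign_vectors d. 1 - t * (signed_sum d r u)^2 + t^2 / 2 * (signed_sum d r u)^(2*2))"
  proof (rule sum_mono)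
    fix r
    have "exp (- (t * (signed_sum d r u)^2))
        \<le> 1 - t * (signed_sum d r u)^2 + (t * (signed_sum d r u)^2)^2 / 2"
      using t by (intro exp_minus_le_quadratic) simp
    then show "exp (- (t * (signed_sum d r u)^2))
        \<le> 1 - t * (signed_sum d r u)^2 + t^2 / 2 * (signed_sum d r u)^(2*2)"
      by (simp add: power_mult_distrib flip: power_mult)
  qed
  also have "\<dots> = 2^d - t * 2^d + t^2 / 2 * (\<Sum>r\<in>sign_vectors d. (signed_sum d r u)^(2*2))"
    using rademacher_second_moment[of d u] u
    by (simp add: sum.distrib sum_subtractf card_sign_vectors
        flip: sum_distrib_left sum_divide_distrib)
  also have "\<dots> \<le> 2^d - t * 2^d + t^2 / 2 * (2^d * 2 * 6^2 * fact 2)"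
    by (intro add_left_mono mult_left_mono rademacher_even_moment_le u) auto
  also have "\<dots> = 2^d * (1 - t + 72 * t^2)"
    by (simp add: algebra_simps)
  finally show ?thesis .
qed

section \<open>Random sign matrices\<close>

text \<open>\<open>sq_norm_proj k d A u\<close> is \<open>|A u|\<^sup>2\<close> for the matrix with rows \<open>A 0, \<dots>, A (k - 1)\<close>;
its average over all sign matrices is \<open>k |u|\<^sup>2\<close>.\<close>

definition sign_matrices :: "nat \<Rightarrow> nat \<Rightarrow> (nat \<Rightarrow> nat \<Rightarrow> real) set" where
  "sign_matrices k d = PiE {..<k} (\<lambda>_. sign_vectors d)"

definition sq_norm_proj :: "nat \<Rightarrow> nat \<Rightarrow> (nat \<Rightarrow> nat \<Rightarrow> real) \<Rightarrow> (nat \<Rightarrow> real) \<Rightarrow> real" where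
  "sq_norm_proj k d A u = (\<Sum>j<k. (signed_sum d (A j) u)^2)"

lemma finite_sign_matrices: "finite (sign_matrices k d)"
  unfolding sign_matrices_def by (intro finite_PiE finite_sign_vectors) auto

lemma card_sign_matrices: "card (sign_matrices k d) = (2^d)^k"
  unfolding sign_matrices_def by (simp add: card_PiE card_sign_vectors)

lemma sum_sign_matrices_exp_sq_norm_proj:
  "(\<Sum>A\<in>sign_matrices k d. exp (s * sq_norm_proj k d A u))
    = (\<Sum>r\<in>sign_vectors d. exp (s * (signed_sum d r u)^2))^k"
proof -
  have "(\<Sum>A\<in>sign_matrices k d. exp (s * sq_norm_proj k d A u))
      = (\<Sum>A\<in>sign_matrices k d. \<Prod>j<k. exp (s * (signed_sum d (A j) u)^2))"
    unfolding sq_norm_proj_def by (simp add: sum_distrib_left exp_sum)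
  also have "\<dots> = (\<Prod>j<k. \<Sum>r\<in>sign_vectors d. exp (s * (signed_sum d r u)^2))"
    unfolding sign_matrices_def by (rule prod_sum_PiE[symmetric]) (auto simp: finite_sign_vectors)
  finally show ?thesis by simp
qed

lemma card_superlevel_mult_le_sum:
  assumes "finite S" "\<And>x. x \<in> S \<Longrightarrow> 0 \<le> f x"
  shows "real (card {x\<in>S. a \<le> f x}) * a \<le> (\<Sum>x\<in>S. f x)"
proof -
  have "real (card {x\<in>S. a \<le> f x}) * a \<le> (\<Sum>x\<in>{x\<in>S. a \<le> f x}. f x)"
    using sum_mono[of "{x\<in>S. a \<le> f x}" "\<lambda>_. a" f] by simp
  also have "\<dots> \<le> (\<Sum>x\<in>S. f x)"
    using assms by (intro sum_mono2) auto
  finally show ?thesis .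
qed

lemma card_sign_matrices_chernoff:
  "real (card {A\<in>sign_matrices k d. a \<le> s * sq_norm_proj k d A u}) * exp a
    \<le> (\<Sum>r\<in>sign_vectors d. exp (s * (signed_sum d r u)^2))^k"
  using card_superlevel_mult_le_sum[OF finite_sign_matrices[of k d],
      where f="\<lambda>A. exp (s * sq_norm_proj k d A u)" and a="exp a"]
  by (simp add: sum_sign_matrices_exp_sq_norm_proj)

lemma card_sq_norm_proj_ge_le:
  assumes u: "(\<Sum>i<d. (u i)^2) = 1" and \<delta>: "0 < \<delta>" "\<delta> \<le> 1/4"
  shows "real (card {A\<in>sign_matrices k d. (1+\<delta>) * k \<le> sq_norm_proj k d A u})
    \<le> real (card (sign_matrices k d)) * exp (- (k * \<delta>^2 / 576))"
proof -
  define t where "t = \<delta> / 288"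
  have t: "0 < t" "t \<le> 1/12"
    using \<delta> by (auto simp: t_def)
  have "{A\<in>sign_matrices k d. (1+\<delta>) * k \<le> sq_norm_proj k d A u}
      = {A\<in>sign_matrices k d. t * ((1+\<delta>) * k) \<le> t * sq_norm_proj k d A u}"
    using t by auto
  then have "real (card {A\<in>sign_matrices k d. (1+\<delta>) * k \<le> sq_norm_proj k d A u})
        * exp (t * ((1+\<delta>) * k))
      \<le> (\<Sum>r\<in>sign_vectors d. exp (t * (signed_sum d r u)^2))^k"
    using card_sign_matrices_chernoff[of k d "t * ((1+\<delta>) * k)" t u] by simp
  also have "\<dots> \<le> (2^d * (1 + t + 144 * t^2))^k"
    using rademacher_square_mgf_le[OF u] t by (intro power_mono sum_nonneg) auto
  also have "\<dots> \<le> (2^d * exp (t + 144 * t^2))^k"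
    using exp_ge_add_one_self[of "t + 144 * t^2"] t
    by (intro power_mono mult_left_mono) (auto simp: add.assoc)
  also have "\<dots> = real (card (sign_matrices k d)) * exp (k * (t + 144 * t^2))"
    by (simp add: card_sign_matrices power_mult_distrib power_mult flip: exp_of_nat_mult)
  finally have "real (card {A\<in>sign_matrices k d. (1+\<delta>) * k \<le> sq_norm_proj k d A u})
      \<le> real (card (sign_matrices k d)) * exp (k * (t + 144 * t^2)) / exp (t * ((1+\<delta>) * k))"
    by (simp add: pos_le_divide_eq)
  also have "\<dots> = real (card (sign_matrices k d)) * exp (k * (t + 144 * t^2) - t * ((1+\<delta>) * k))"
    by (simp add: exp_diff)
  also have "k * (t + 144 * t^2) - t * ((1+\<delta>) * k) = - (k * \<delta>^2 / 576)"
    by (simp add: t_def power2_eq_square field_simps)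
  finally show ?thesis .
qed

lemma card_sq_norm_proj_le_le:
  assumes u: "(\<Sum>i<d. (u i)^2) = 1" and \<delta>: "0 < \<delta>" "\<delta> \<le> 1/4"
  shows "real (card {A\<in>sign_matrices k d. sq_norm_proj k d A u \<le> (1-\<delta>) * k})
    \<le> real (card (sign_matrices k d)) * exp (- (k * \<delta>^2 / 576))"
proof -
  define t where "t = \<delta> / 288"
  have t: "0 < t" "t \<le> 1/12"
    using \<delta> by (auto simp: t_def)
  have "{A\<in>sign_matrices k d. sq_norm_proj k d A u \<le> (1-\<delta>) * k}
      = {A\<in>sign_matrices k d. - t * ((1-\<delta>) * k) \<le> - t * sq_norm_proj k d A u}"
    using t by auto
  then have "real (card {A\<in>sign_matrices k d. sq_norm_proj k d A u \<le> (1-\<delta>) * k})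
        * exp (- t * ((1-\<delta>) * k))
      \<le> (\<Sum>r\<in>sign_vectors d. exp (- t * (signed_sum d r u)^2))^k"
    using card_sign_matrices_chernoff[of k d "- t * ((1-\<delta>) * k)" "- t" u] by simp
  also have "\<dots> \<le> (2^d * (1 - t + 72 * t^2))^k"
    using rademacher_square_mgf_neg_le[OF u] t by (intro power_mono sum_nonneg) auto
  also have "\<dots> \<le> (2^d * exp (- t + 72 * t^2))^k"
  proof (intro power_mono mult_left_mono)
    show "1 - t + 72 * t^2 \<le> exp (- t + 72 * t^2)"
      using exp_ge_add_one_self[of "- t + 72 * t^2"] by linarith
  qed (use t in auto)
  also have "\<dots> = real (card (sign_matrices k d)) * exp (k * (- t + 72 * t^2))"
    by (simp add: card_sign_matrices power_mult_distrib power_mult flip: exp_of_nat_mult)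
  finally have "real (card {A\<in>sign_matrices k d. sq_norm_proj k d A u \<le> (1-\<delta>) * k})
      \<le> real (card (sign_matrices k d)) * exp (k * (- t + 72 * t^2)) / exp (- t * ((1-\<delta>) * k))"
    by (simp add: pos_le_divide_eq)
  also have "\<dots> = real (card (sign_matrices k d)) * exp (k * (- t + 72 * t^2) - (- t * ((1-\<delta>) * k)))"
    by (simp only: exp_diff times_divide_eq_right)
  also have "\<dots> \<le> real (card (sign_matrices k d)) * exp (- (k * \<delta>^2 / 576))"
    using \<delta> by (intro mult_left_mono) (auto simp: t_def power2_eq_square field_simps)
  finally show ?thesis .
qed

lemma sign_matrix_near_isometry_on_unit_vectors:
  assumes U: "finite U" "\<And>u. u \<in> U \<Longrightarrow> (\<Sum>i<d. (u i)^2) = 1"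
    and \<delta>: "0 < \<delta>" "\<delta> \<le> 1/4"
    and small: "real (card U) * 2 * exp (- (k * \<delta>^2 / 576)) < 1"
  shows "\<exists>A\<in>sign_matrices k d. \<forall>u\<in>U.
    (1-\<delta>) * k < sq_norm_proj k d A u \<and> sq_norm_proj k d A u < (1+\<delta>) * k"
proof -
  define bad where "bad u = {A\<in>sign_matrices k d. (1+\<delta>) * k \<le> sq_norm_proj k d A u}
    \<union> {A\<in>sign_matrices k d. sq_norm_proj k d A u \<le> (1-\<delta>) * k}" for u
  define N where "N = real (card (sign_matrices k d))"
  have N: "N > 0"
    by (simp add: N_def card_sign_matrices)
  have card_bad: "real (card (bad u)) \<le> 2 * N * exp (- (k * \<delta>^2 / 576))" if "u \<in> U" for u
    using card_Un_le[of "{A\<in>sign_matrices k d. (1+\<delta>) * k \<le> sq_norm_proj k d A u}"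
        "{A\<in>sign_matrices k d. sq_norm_proj k d A u \<le> (1-\<delta>) * k}"]
      card_sq_norm_proj_ge_le[OF U(2)[OF that] \<delta>, of k] card_sq_norm_proj_le_le[OF U(2)[OF that] \<delta>, of k]
    unfolding bad_def N_def by linarith
  have "real (card (\<Union>u\<in>U. bad u)) \<le> (\<Sum>u\<in>U. real (card (bad u)))"
    using card_UN_le[OF U(1), of bad] by (simp flip: of_nat_sum)
  also have "\<dots> \<le> real (card U) * (2 * N * exp (- (k * \<delta>^2 / 576)))"
    using sum_mono[of U _ "\<lambda>_. 2 * N * exp (- (k * \<delta>^2 / 576))"] card_bad by simp
  also have "\<dots> < N"
    using small N by (simp add: mult_ac)
  finally have "\<not> sign_matrices k d \<subseteq> (\<Union>u\<in>U. bad u)"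
    using card_mono[of "\<Union>u\<in>U. bad u" "sign_matrices k d"] U(1)
    by (auto simp: N_def bad_def finite_sign_matrices)
  then obtain A where "A \<in> sign_matrices k d" "\<forall>u\<in>U. A \<notin> bad u"
    by blast
  then show ?thesis
    by (auto simp: bad_def not_le)
qed

lemma sq_norm_proj_scale: "sq_norm_proj k d A (\<lambda>i. c * u i) = c^2 * sq_norm_proj k d A u"
  by (simp add: sq_norm_proj_def signed_sum_def sum_distrib_left power_mult_distrib mult_ac
      flip: sum_distrib_left)

lemma sq_norm_proj_vnorm_eq_0:
  assumes "vnorm d u = 0"
  shows "sq_norm_proj k d A u = 0"
proof -
  have "u i = 0" if "i < d" for i
    using assms that by (simp add: vnorm_def sum_nonneg_eq_0_iff)
  then show ?thesis
    by (simp add: sq_norm_proj_def signed_sum_def)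
qed

lemma sign_matrix_near_isometry:
  assumes P: "finite P" and \<delta>: "0 < \<delta>" "\<delta> \<le> 1/4"
    and k: "2304 * ln (card P) \<le> k * \<delta>^2"
  shows "\<exists>A\<in>sign_matrices k d. \<forall>x\<in>P. \<forall>y\<in>P.
    (1-\<delta>) * k * (vnorm d (x - y))^2 \<le> sq_norm_proj k d A (x - y) \<and>
    sq_norm_proj k d A (x - y) \<le> (1+\<delta>) * k * (vnorm d (x - y))^2"
proof -
  define pairs where "pairs = {(x, y) \<in> P \<times> P. vnorm d (x - y) \<noteq> 0}"
  define direction where "direction = (\<lambda>(x, y) i. (x - y) i / vnorm d (x - y))"
  define U where "U = direction ` pairs"
  have pairs_sub: "pairs \<subseteq> P \<times> P"
    by (auto simp: pairs_def)
  have fin_pairs: "finite pairs"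
    using finite_subset[OF pairs_sub] P by blast
  have U_unit: "(\<Sum>i<d. (u i)^2) = 1" if u: "u \<in> U" for u
  proof -
    obtain x y where "(x, y) \<in> pairs" "u = direction (x, y)"
      using u unfolding U_def by auto
    then show ?thesis
      using sum_sq_div_vnorm[of d "x - y"] by (simp add: pairs_def direction_def)
  qed
  have "real (card U) * 2 * exp (- (k * \<delta>^2 / 576)) < 1"
  proof (cases "card P \<le> 1")
    case True
    then have "pairs = {}"
      using P by (force simp: pairs_def card_le_Suc0_iff_eq)
    then show ?thesis
      by (simp add: U_def)
  next
    case False
    define n where "n = real (card P)"
    have n: "2 \<le> n"
      using False by (simp add: n_def)
    have "card U \<le> card pairs"
      unfolding U_def using fin_pairs by (rule card_image_le)
    also have "\<dots> \<le> card (P \<times> P)"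
      using pairs_sub P by (intro card_mono) auto
    finally have "card U \<le> card (P \<times> P)" .
    then have "real (card U) \<le> n^2"
      by (simp add: n_def card_cartesian_product power2_eq_square flip: of_nat_mult)
    moreover have "exp (- (k * \<delta>^2 / 576)) \<le> 1 / n^4"
      using k n by (intro exp_minus_le_inverse_power) (auto simp: n_def)
    ultimately have "real (card U) * 2 * exp (- (k * \<delta>^2 / 576)) \<le> n^2 * 2 * (1 / n^4)"
      by (intro mult_mono) auto
    also have "\<dots> = 2 / n^2"
      using n by (simp add: field_simps power2_eq_square power4_eq_xxxx)
    also have "\<dots> < 1"
      using n power_mono[of 2 n 2] by (simp add: divide_less_eq)
    finally show ?thesis .
  qed
  then obtain A where A: "A \<in> sign_matrices k d"
    and A_U: "\<forall>u\<in>U. (1-\<delta>) * k < sq_norm_proj k d A u \<and> sq_norm_proj k d A u < (1+\<delta>) * k"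
    using sign_matrix_near_isometry_on_unit_vectors[OF finite_imageI[OF fin_pairs] U_unit \<delta>]
    unfolding U_def by blast
  have "(1-\<delta>) * k * (vnorm d (x - y))^2 \<le> sq_norm_proj k d A (x - y) \<and>
    sq_norm_proj k d A (x - y) \<le> (1+\<delta>) * k * (vnorm d (x - y))^2" if "x \<in> P" "y \<in> P" for x y
  proof (cases "vnorm d (x - y) = 0")
    case True
    then show ?thesis
      by (simp add: sq_norm_proj_vnorm_eq_0)
  next
    case False
    let ?\<nu> = "vnorm d (x - y)"
    have "x - y = (\<lambda>i. ?\<nu> * direction (x, y) i)"
      using False by (auto simp: direction_def)
    then have "sq_norm_proj k d A (x - y) = sq_norm_proj k d A (\<lambda>i. ?\<nu> * direction (x, y) i)"
      by (rule arg_cong)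
    also have "\<dots> = ?\<nu>^2 * sq_norm_proj k d A (direction (x, y))"
      by (rule sq_norm_proj_scale)
    finally have scale: "sq_norm_proj k d A (x - y) = ?\<nu>^2 * sq_norm_proj k d A (direction (x, y))" .
    have "direction (x, y) \<in> U"
      using that False by (auto simp: U_def pairs_def)
    then have "(1-\<delta>) * k \<le> sq_norm_proj k d A (direction (x, y))"
      and "sq_norm_proj k d A (direction (x, y)) \<le> (1+\<delta>) * k"
      using A_U by (auto simp: less_imp_le)
    then show ?thesis
      unfolding scale by (simp add: mult.commute[of _ "?\<nu>^2"] mult_left_mono)
  qed
  then show ?thesis
    using A by blast
qed

section \<open>Rounding to the lattice\<close>

definition scaled_proj :: "nat \<Rightarrow> nat \<Rightarrow> (nat \<Rightarrow> nat \<Rightarrow> real) \<Rightarrow> (nat \<Rightarrow> real) \<Rightarrow> nat \<Rightarrow> real" where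
  "scaled_proj k d A x j = signed_sum d (A j) x / sqrt k"

definition rounded_proj :: "nat \<Rightarrow> nat \<Rightarrow> real \<Rightarrow> (nat \<Rightarrow> nat \<Rightarrow> real) \<Rightarrow> (nat \<Rightarrow> real) \<Rightarrow> nat \<Rightarrow> real" where
  "rounded_proj k d l A x j = (if j < k then of_int (round (l * scaled_proj k d A x j)) / l else 0)"

lemma rounded_proj_in_scaled_lattice: "rounded_proj k d l A x \<in> scaled_lattice (1 / l) k"
  by (auto simp: scaled_lattice_def vec_space_def rounded_proj_def)

lemma scaled_proj_diff: "scaled_proj k d A (x - y) = scaled_proj k d A x - scaled_proj k d A y"
  by (auto simp: scaled_proj_def signed_sum_def algebra_simps sum_subtractf diff_divide_distrib)

lemma vnorm_scaled_proj: "vnorm k (scaled_proj k d A x) = sqrt (sq_norm_proj k d A x / k)"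
  by (simp add: vnorm_def scaled_proj_def sq_norm_proj_def power_divide sum_divide_distrib)

lemma vnorm_rounded_proj_error_le:
  assumes "0 < l"
  shows "vnorm k (rounded_proj k d l A x - scaled_proj k d A x) \<le> sqrt k / (2 * l)"
proof -
  have round_err: "\<bar>of_int (round (l * z)) / l - z\<bar> \<le> 1 / (2 * l)" for z
  proof -
    have "\<bar>of_int (round (l * z)) / l - z\<bar> = \<bar>of_int (round (l * z)) - l * z\<bar> / l"
      using assms by (simp add: field_simps)
    also have "\<dots> \<le> (1/2) / l"
      using assms of_int_round_abs_le[of "l * z"] by (intro divide_right_mono) auto
    finally show ?thesis
      by simp
  qed
  have "(\<Sum>j<k. ((rounded_proj k d l A x - scaled_proj k d A x) j)^2) \<le> (\<Sum>j<k. (1 / (2 * l))^2)"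
  proof (intro sum_mono)
    fix j
    assume "j \<in> {..<k}"
    then have "\<bar>(rounded_proj k d l A x - scaled_proj k d A x) j\<bar> \<le> 1 / (2 * l)"
      by (simp add: rounded_proj_def round_err)
    from power_mono[OF this abs_ge_zero, of 2]
    show "((rounded_proj k d l A x - scaled_proj k d A x) j)^2 \<le> (1 / (2 * l))^2"
      by simp
  qed
  then have "vnorm k (rounded_proj k d l A x - scaled_proj k d A x) \<le> sqrt (real k * (1 / (2 * l))^2)"
    unfolding vnorm_def by (simp add: real_sqrt_le_mono)
  also have "\<dots> = sqrt k / (2 * l)"
    using assms by (simp add: real_sqrt_mult)
  finally show ?thesis .
qed

lemma vnorm_scaled_proj_bounds:
  assumes k: "0 < k" and \<delta>: "0 \<le> \<delta>" "\<delta> \<le> 1"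
    and lower: "(1-\<delta>) * k * (vnorm d u)^2 \<le> sq_norm_proj k d A u"
    and upper: "sq_norm_proj k d A u \<le> (1+\<delta>) * k * (vnorm d u)^2"
  shows "(1-\<delta>) * vnorm d u \<le> vnorm k (scaled_proj k d A u)"
    and "vnorm k (scaled_proj k d A u) \<le> (1+\<delta>) * vnorm d u"
proof -
  let ?\<nu> = "vnorm d u"
  have "((1-\<delta>) * ?\<nu>)^2 = (1-\<delta>)^2 * ?\<nu>^2"
    by (simp add: power_mult_distrib)
  also have "\<dots> \<le> (1-\<delta>) * ?\<nu>^2"
    using \<delta> by (intro mult_right_mono) (simp_all add: power2_eq_square mult_left_le_one_le)
  also have "\<dots> \<le> sq_norm_proj k d A u / k"
    using lower k by (simp add: field_simps)
  finally show "(1-\<delta>) * ?\<nu> \<le> vnorm k (scaled_proj k d A u)"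
    unfolding vnorm_scaled_proj by (rule real_le_rsqrt)
  have "sq_norm_proj k d A u / k \<le> (1+\<delta>) * ?\<nu>^2"
    using upper k by (simp add: field_simps)
  also have "\<dots> \<le> (1+\<delta>)^2 * ?\<nu>^2"
    using \<delta> by (intro mult_right_mono) (simp_all add: power2_eq_square)
  also have "\<dots> = ((1+\<delta>) * ?\<nu>)^2"
    by (simp add: power_mult_distrib)
  finally show "vnorm k (scaled_proj k d A u) \<le> (1+\<delta>) * ?\<nu>"
    unfolding vnorm_scaled_proj using \<delta> by (intro real_le_lsqrt) (simp_all add: vnorm_nonneg)
qed

lemma rounded_proj_distortion:
  assumes l: "0 < l" and k: "0 < k" and \<delta>: "0 \<le> \<delta>" "\<delta> \<le> 1"
    and lower: "(1-\<delta>) * k * (vnorm d (x - y))^2 \<le> sq_norm_proj k d A (x - y)"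
    and upper: "sq_norm_proj k d A (x - y) \<le> (1+\<delta>) * k * (vnorm d (x - y))^2"
    and sep: "sqrt k / l \<le> \<delta> * vnorm d (x - y)"
  shows "(1 - 2*\<delta>) * vnorm d (x - y) \<le> vnorm k (rounded_proj k d l A x - rounded_proj k d l A y)"
    and "vnorm k (rounded_proj k d l A x - rounded_proj k d l A y) \<le> (1 + 2*\<delta>) * vnorm d (x - y)"
proof -
  let ?F = "rounded_proj k d l A" and ?g = "scaled_proj k d A"
  have error_split: "(?F x - ?F y) - ?g (x - y) = (?F x - ?g x) - (?F y - ?g y)"
    unfolding scaled_proj_diff unfolding fun_diff_def by (rule ext) (simp add: algebra_simps)
  have "vnorm k ((?F x - ?F y) - ?g (x - y)) \<le> sqrt k / (2 * l) + sqrt k / (2 * l)"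
    unfolding error_split using vnorm_diff_le[of k "?F x - ?g x" "?F y - ?g y"]
      vnorm_rounded_proj_error_le[OF l, of k d A x] vnorm_rounded_proj_error_le[OF l, of k d A y]
    by linarith
  then have "\<bar>vnorm k (?F x - ?F y) - vnorm k (?g (x - y))\<bar> \<le> sqrt k / l"
    using abs_vnorm_diff_le[of k "?F x - ?F y" "?g (x - y)"] by simp
  then show "(1 - 2*\<delta>) * vnorm d (x - y) \<le> vnorm k (?F x - ?F y)"
    and "vnorm k (?F x - ?F y) \<le> (1 + 2*\<delta>) * vnorm d (x - y)"
    using vnorm_scaled_proj_bounds[OF k \<delta> lower upper] sep by (simp_all add: abs_le_iff algebra_simps)
qed

lemma scaled_lattice_dist_ge:
  assumes x: "x \<in> scaled_lattice s d" and y: "y \<in> scaled_lattice s d"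
    and s: "0 \<le> s" and "x \<noteq> y"
  shows "s \<le> vnorm d (x - y)"
proof -
  obtain i where i: "x i \<noteq> y i"
    using \<open>x \<noteq> y\<close> by blast
  have "i < d"
  proof (rule ccontr)
    assume "\<not> i < d"
    then have "x i = 0" "y i = 0"
      using x y by (auto simp: scaled_lattice_def vec_space_def)
    with i show False
      by simp
  qed
  obtain z1 :: int where z1: "x i = s * z1"
    using x \<open>i < d\<close> by (auto simp: scaled_lattice_def)
  obtain z2 :: int where z2: "y i = s * z2"
    using y \<open>i < d\<close> by (auto simp: scaled_lattice_def)
  have "z1 \<noteq> z2"
    using i z1 z2 by auto
  then have "1 \<le> \<bar>real_of_int z1 - real_of_int z2\<bar>"
    by (simp flip: of_int_diff)
  then have "s * 1 \<le> s * \<bar>real_of_int z1 - real_of_int z2\<bar>"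
    using s by (rule mult_left_mono)
  also have "\<dots> = \<bar>x i - y i\<bar>"
    using s by (simp add: z1 z2 abs_mult flip: right_diff_distrib)
  also have "\<dots> = sqrt (((x - y) i)^2)"
    by simp
  also have "\<dots> \<le> vnorm d (x - y)"
    unfolding vnorm_def using \<open>i < d\<close> by (intro real_sqrt_le_mono member_le_sum) auto
  finally show ?thesis
    by simp
qed

theorem scaled_lattice_embedding:
  fixes lam lam0 :: real
  assumes \<epsilon>: "0 < \<epsilon>" "\<epsilon> \<le> 1/2" and lam0: "0 < lam0" and k: "0 < k"
    and lam: "2 * sqrt k / \<epsilon> \<le> lam"
    and D: "finite D" "D \<subseteq> scaled_lattice (lam / lam0) d"
    and card_D: "9216 / \<epsilon>^2 * ln (card D) \<le> k"
  shows "\<exists>F. F ` D \<subseteq> scaled_lattice (1 / lam0) k \<and>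
    (\<forall>x\<in>D. \<forall>y\<in>D. (1 - \<epsilon>) * vnorm d (x - y) \<le> vnorm k (F x - F y) \<and>
                   vnorm k (F x - F y) \<le> (1 + \<epsilon>) * vnorm d (x - y))"
proof -
  define \<delta> where "\<delta> = \<epsilon> / 2"
  have \<delta>: "0 < \<delta>" "\<delta> \<le> 1/4"
    using \<epsilon> by (auto simp: \<delta>_def)
  have "2304 * ln (card D) \<le> k * \<delta>^2"
    using card_D \<epsilon> by (simp add: \<delta>_def field_simps)
  then obtain A where A: "\<forall>x\<in>D. \<forall>y\<in>D.
      (1-\<delta>) * k * (vnorm d (x - y))^2 \<le> sq_norm_proj k d A (x - y) \<and>
      sq_norm_proj k d A (x - y) \<le> (1+\<delta>) * k * (vnorm d (x - y))^2"
    using sign_matrix_near_isometry[OF D(1) \<delta>] by blast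
  have "0 < 2 * sqrt k / \<epsilon>"
    using \<epsilon> k by simp
  then have "0 < lam"
    using lam by linarith
  then have spacing: "0 < lam / lam0" "sqrt k / lam0 \<le> \<delta> * (lam / lam0)"
    using lam lam0 \<epsilon> by (simp_all add: \<delta>_def field_simps)
  show ?thesis
  proof (intro exI[of _ "rounded_proj k d lam0 A"] conjI ballI)
    show "rounded_proj k d lam0 A ` D \<subseteq> scaled_lattice (1 / lam0) k"
      using rounded_proj_in_scaled_lattice by blast
  next
    fix x y
    assume xy: "x \<in> D" "y \<in> D"
    have "(1 - 2*\<delta>) * vnorm d (x - y) \<le> vnorm k (rounded_proj k d lam0 A x - rounded_proj k d lam0 A y) \<and>
      vnorm k (rounded_proj k d lam0 A x - rounded_proj k d lam0 A y) \<le> (1 + 2*\<delta>) * vnorm d (x - y)"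
    proof (cases "x = y")
      case False
      have "lam / lam0 \<le> vnorm d (x - y)"
        using scaled_lattice_dist_ge[of x "lam / lam0" d y] xy D(2) spacing(1) False by auto
      then have "sqrt k / lam0 \<le> \<delta> * vnorm d (x - y)"
        using spacing(2) \<delta> by (meson mult_left_mono less_imp_le order_trans)
      moreover have "\<delta> \<le> 1"
        using \<delta> by simp
      ultimately show ?thesis
        using rounded_proj_distortion[OF lam0 k less_imp_le[OF \<delta>(1)]] A xy by blast
    qed simp
    then show "(1 - \<epsilon>) * vnorm d (x - y) \<le> vnorm k (rounded_proj k d lam0 A x - rounded_proj k d lam0 A y)"
      and "vnorm k (rounded_proj k d lam0 A x - rounded_proj k d lam0 A y) \<le> (1 + \<epsilon>) * vnorm d (x - y)"
      by (simp_all add: \<delta>_def)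
  qed
qed

theorem mainTheorem1:
  "\<forall>\<epsilon>::real. \<epsilon> > 0 \<longrightarrow>
    (\<exists>c::real. c > 0 \<and>
      (\<forall>(lam0::nat) (N0::nat). lam0 \<ge> 1 \<longrightarrow> \<epsilon> < 1 / (real lam0 + 1) \<longrightarrow>
        (\<forall>k::nat. k > 0 \<longrightarrow>
          (\<exists>lam1::nat. \<forall>(d::nat) (lam::nat) (D::(nat \<Rightarrow> real) set).
             real k \<ge> c * ln (real d) \<longrightarrow> lam \<ge> lam1 \<longrightarrow>
             D \<subseteq> scaled_lattice (real lam / real lam0) d \<inter> cball0 d (real lam * real N0) \<longrightarrow>
             finite D \<longrightarrow> card D = d \<longrightarrow>
             (\<exists>F::(nat \<Rightarrow> real) \<Rightarrow> (nat \<Rightarrow> real).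
                F ` D \<subseteq> scaled_lattice (1 / real lam0) k \<and>
                (\<forall>x\<in>D. \<forall>y\<in>D.
                   (1 - \<epsilon> - \<epsilon> / (real lam * real lam0)) * vnorm d (x - y)
                     \<le> vnorm k (F x - F y) \<and>
                   vnorm k (F x - F y)
                     \<le> (1 + \<epsilon> + \<epsilon> / (real lam * real lam0)) * vnorm d (x - y)))))))"
  apply (intro allI impI)
  subgoal for \<epsilon>
    apply (rule exI[of _ "9216 / \<epsilon>^2"])
    apply (intro conjI allI impI)
     apply simp
    subgoal for lam0 N0 k
      apply (rule exI[of _ "nat \<lceil>2 * sqrt k / \<epsilon>\<rceil>"])
      apply (intro allI impI)
      subgoal premises prems for d lam D
      proof -
        have "1 / (real lam0 + 1) \<le> 1/2"
          using prems by (simp add: field_simps)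
        then have \<epsilon>: "0 < \<epsilon>" "\<epsilon> \<le> 1/2"
          using prems by linarith+
        have "real (nat \<lceil>2 * sqrt k / \<epsilon>\<rceil>) \<le> real lam"
          using prems of_nat_le_iff by blast
        then have "2 * sqrt k / \<epsilon> \<le> real lam"
          by (rule order_trans[OF real_nat_ceiling_ge])
        then obtain F where F: "F ` D \<subseteq> scaled_lattice (1 / real lam0) k"
          "\<forall>x\<in>D. \<forall>y\<in>D. (1 - \<epsilon>) * vnorm d (x - y) \<le> vnorm k (F x - F y) \<and>
                       vnorm k (F x - F y) \<le> (1 + \<epsilon>) * vnorm d (x - y)"
          using scaled_lattice_embedding[OF \<epsilon>, of "real lam0" k "real lam" D d] prems by auto
        show ?thesis
        proof (intro exI[of _ F] conjI ballI)
          fix x y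
          assume "x \<in> D" "y \<in> D"
          then have "(1 - \<epsilon>) * vnorm d (x - y) \<le> vnorm k (F x - F y)"
            and "vnorm k (F x - F y) \<le> (1 + \<epsilon>) * vnorm d (x - y)"
            using F(2) by auto
          moreover have "0 \<le> \<epsilon> / (real lam * real lam0) * vnorm d (x - y)"
            using \<epsilon> by (simp add: vnorm_nonneg)
          ultimately show "(1 - \<epsilon> - \<epsilon> / (real lam * real lam0)) * vnorm d (x - y) \<le> vnorm k (F x - F y)"
            and "vnorm k (F x - F y) \<le> (1 + \<epsilon> + \<epsilon> / (real lam * real lam0)) * vnorm d (x - y)"
            unfolding ring_distribs by linarith+
        qed (rule F(1))
      qed
      done
    done
  done

end
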